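(* Consider a channel with finite input alphabet $\mathcal X$ and output alphabet $\mathcal Y$ specified by causal conditioning pmfs $p(y^n\|x^n)$ for every $n\ge1$, whose feedback capacity is $C_{fb}=\lim_{n\to\infty}\frac1n\max_{P(x^n\|y^{n-1})}I(X^n\to Y^n)$ and whose non-feedback capacity is $C=\lim_{n\to\infty}\frac1n\max_{P(x^n)}I(X^n\to Y^n)$. Suppose that for every $n$ there is a causal conditioning pmf $P^*(x^n\|y^{n-1})$, all of whose entries are positive, achieving $\max_{P(x^n\|y^{n-1})}I(X^n\to Y^n)$, and let $P^*(y^n)=\sum_{x^n}p(y^n\|x^n)p^*(x^n\|y^{n-1})$ be the induced output pmf. If for every $n$ there exists an input pmf $P(x^n)$ such that $p^*(y^n)=\sum_{x^n}p(y^n\|x^n)p(x^n)$ for all $y^n$, then $C_{fb}=C$.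
   Context: Causal conditioning: $p(x^n\|y^{n-1})=\prod_{i=1}^n p(x_i|x^{i-1},y^{i-1})$, $p(y^n\|x^n)=\prod_{i=1}^n p(y_i|y^{i-1},x^i)$. Directed information: $I(X^n\to Y^n)=\sum_{i=1}^n I(X^i;Y_i|Y^{i-1})$, computed under the joint law $p(x^n\|y^{n-1})p(y^n\|x^n)$ (with $p(x^n\|y^{n-1})=p(x^n)$ in the non-feedback maximization). *)

theory Defs
  imports Complex_Main
begin

definition seqs :: "nat \<Rightarrow> 'a list set" where
  "seqs n = {xs. length xs = n}"

definition ccond_chan :: "nat \<Rightarrow> ('x::finite list \<Rightarrow> 'y::finite list \<Rightarrow> real) \<Rightarrow> bool" where
  "ccond_chan n W \<longleftrightarrow> (\<exists>q :: nat \<Rightarrow> 'y list \<Rightarrow> 'x list \<Rightarrow> 'y \<Rightarrow> real.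
      (\<forall>i ys xs y. 0 \<le> q i ys xs y) \<and> (\<forall>i ys xs. (\<Sum>y\<in>UNIV. q i ys xs y) = 1) \<and>
      (\<forall>xs\<in>seqs n. \<forall>ys\<in>seqs n.
          W xs ys = (\<Prod>i<n. q i (take i ys) (take (Suc i) xs) (ys ! i))))"

definition ccond_input :: "nat \<Rightarrow> ('x::finite list \<Rightarrow> 'y::finite list \<Rightarrow> real) \<Rightarrow> bool" where
  "ccond_input n Q \<longleftrightarrow> (\<exists>r :: nat \<Rightarrow> 'x list \<Rightarrow> 'y list \<Rightarrow> 'x \<Rightarrow> real.
      (\<forall>i xs ys x. 0 \<le> r i xs ys x) \<and> (\<forall>i xs ys. (\<Sum>x\<in>UNIV. r i xs ys x) = 1) \<and>
      (\<forall>xs\<in>seqs n. \<forall>ys\<in>seqs n.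
          Q xs ys = (\<Prod>i<n. r i (take i xs) (take i ys) (xs ! i))))"

definition is_pmf_seq :: "nat \<Rightarrow> ('x::finite list \<Rightarrow> real) \<Rightarrow> bool" where
  "is_pmf_seq n P \<longleftrightarrow> (\<forall>xs\<in>seqs n. 0 \<le> P xs) \<and> (\<Sum>xs\<in>seqs n. P xs) = 1"

definition marg :: "nat \<Rightarrow> ('x::finite list \<Rightarrow> 'y::finite list \<Rightarrow> real) \<Rightarrow> nat \<Rightarrow> nat
                      \<Rightarrow> 'x list \<Rightarrow> 'y list \<Rightarrow> real" where
  "marg n J i j a b = (\<Sum>xs\<in>seqs n. \<Sum>ys\<in>seqs n.
       if take i xs = a \<and> take j ys = b then J xs ys else 0)"

text \<open>Conditional mutual information I(X^i;Y_i|Y^{i-1}) under joint pmf J on length-n sequences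
  (bits; terms with zero probability contribute 0).\<close>
definition cmi_term :: "nat \<Rightarrow> ('x::finite list \<Rightarrow> 'y::finite list \<Rightarrow> real) \<Rightarrow> nat \<Rightarrow> real" where
  "cmi_term n J i = (\<Sum>a\<in>seqs i. \<Sum>b\<in>seqs i.
      marg n J i i a b *
        log 2 ((marg n J i i a b * marg n J 0 (i - 1) [] (take (i - 1) b)) /
               (marg n J i (i - 1) a (take (i - 1) b) * marg n J 0 i [] b)))"

definition dirinfo :: "nat \<Rightarrow> ('x::finite list \<Rightarrow> 'y::finite list \<Rightarrow> real)
                         \<Rightarrow> ('x list \<Rightarrow> 'y list \<Rightarrow> real) \<Rightarrow> real" where
  "dirinfo n Q W = (\<Sum>i=1..n. cmi_term n (\<lambda>xs ys. Q xs ys * W xs ys) i)"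

definition Cfb_n :: "(nat \<Rightarrow> 'x::finite list \<Rightarrow> 'y::finite list \<Rightarrow> real) \<Rightarrow> nat \<Rightarrow> real" where
  "Cfb_n W n = Sup ((\<lambda>Q. dirinfo n Q (W n)) ` {Q. ccond_input n Q})"

definition Cnf_n :: "(nat \<Rightarrow> 'x::finite list \<Rightarrow> 'y::finite list \<Rightarrow> real) \<Rightarrow> nat \<Rightarrow> real" where
  "Cnf_n W n = Sup ((\<lambda>P. dirinfo n (\<lambda>xs ys. P xs) (W n)) ` {P. is_pmf_seq n P})"

definition feedback_capacity :: "(nat \<Rightarrow> 'x::finite list \<Rightarrow> 'y::finite list \<Rightarrow> real) \<Rightarrow> real" where
  "feedback_capacity W = lim (\<lambda>n. Cfb_n W n / real n)"

definition capacity :: "(nat \<Rightarrow> 'x::finite list \<Rightarrow> 'y::finite list \<Rightarrow> real) \<Rightarrow> real" where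
  "capacity W = lim (\<lambda>n. Cnf_n W n / real n)"

end

theory Submission
  imports Defs
begin

text \<open>By the chain rule, the directed information of an input \<open>Q\<close> is the expected channel
  log-likelihood minus the output entropy, so among the inputs inducing one fixed output law it is a
  linear function of \<open>Q\<close>. The causal conditioning pmfs form a convex set described by linear
  constraints, and a strictly positive optimiser \<open>Q\<^sup>*\<close> can be pushed a little beyond itself, away from
  any other admissible input \<open>Q\<close>, without leaving that set. Linearity together with the optimality of
  \<open>Q\<^sup>*\<close> at both ends of this segment forces \<open>I(Q) = I(Q\<^sup>*)\<close> whenever \<open>Q\<close> induces the same output law.
  Applied to the non-feedback input \<open>P(x\<^sup>n)\<close> this shows that the \<open>n\<close>-letter feedback and
  non-feedback maxima coincide for every \<open>n\<close>, hence so do the limits.\<close>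

lemma finite_seqs [simp]: "finite (seqs n :: 'a::finite list set)"
proof -
  have "seqs n = {xs::'a list. set xs \<subseteq> UNIV \<and> length xs = n}" by (auto simp: seqs_def)
  then show ?thesis using finite_lists_length_eq[of "UNIV::'a set" n] by simp
qed

lemma seqs_0 [simp]: "seqs 0 = {[]}"
  by (auto simp: seqs_def)

lemma seqs_nonempty: "seqs n \<noteq> {}"
  using length_replicate[of n undefined] unfolding seqs_def by blast

lemma sum_seqs_append:
  assumes "i \<le> n"
  shows "(\<Sum>xs\<in>seqs n. f xs) = (\<Sum>a\<in>seqs i. \<Sum>zs\<in>seqs (n - i). f (a @ zs))"
proof -
  have bij: "bij_betw (\<lambda>(a, zs). a @ zs) (seqs i \<times> seqs (n - i)) (seqs n)"
  proof (rule bij_betw_imageI)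
    show "inj_on (\<lambda>(a, zs). a @ zs) (seqs i \<times> seqs (n - i))"
      by (auto simp: inj_on_def seqs_def)
    have "xs \<in> (\<lambda>(a, zs). a @ zs) ` (seqs i \<times> seqs (n - i))" if "xs \<in> seqs n" for xs
      using that assms
      by (intro image_eqI[of _ _ "(take i xs, drop i xs)"]) (auto simp: seqs_def)
    then show "(\<lambda>(a, zs). a @ zs) ` (seqs i \<times> seqs (n - i)) = seqs n"
      using assms by (auto simp: seqs_def)
  qed
  have "(\<Sum>a\<in>seqs i. \<Sum>zs\<in>seqs (n - i). f (a @ zs))
      = (\<Sum>p\<in>seqs i \<times> seqs (n - i). f ((\<lambda>(a, zs). a @ zs) p))"
    by (simp add: sum.cartesian_product case_prod_beta)
  also have "\<dots> = (\<Sum>xs\<in>seqs n. f xs)"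
    using sum.reindex_bij_betw[OF bij] .
  finally show ?thesis ..
qed

lemma sum_seqs_1: "(\<Sum>a\<in>seqs (Suc 0). f a) = (\<Sum>x\<in>UNIV. f [x])"
proof -
  have "seqs (Suc 0) = (\<lambda>x. [x]) ` UNIV"
    by (auto simp: seqs_def length_Suc_conv)
  then show ?thesis by (metis (no_types, lifting) inj_on_def list.inject sum.reindex_cong)
qed

lemma sum_seqs_Suc_Cons: "(\<Sum>xs\<in>seqs (Suc m). f xs) = (\<Sum>x\<in>UNIV. \<Sum>xs\<in>seqs m. f (x # xs))"
  using sum_seqs_append[of 1 "Suc m" f] by (simp add: sum_seqs_1)

lemma sum_seqs_Suc_snoc: "(\<Sum>xs\<in>seqs (Suc m). f xs) = (\<Sum>xs\<in>seqs m. \<Sum>x\<in>UNIV. f (xs @ [x]))"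
  using sum_seqs_append[of m "Suc m" f] by (simp add: sum_seqs_1)

lemma sum_sum_indicator:
  assumes "finite S" "finite T" "a \<in> S" "b \<in> T"
  shows "(\<Sum>a'\<in>S. \<Sum>b'\<in>T. G a' b' * (if a' = a \<and> b' = b then 1 else 0)) = (G a b :: real)"
proof -
  have "(\<Sum>a'\<in>S. \<Sum>b'\<in>T. G a' b' * (if a' = a \<and> b' = b then 1 else 0))
      = (\<Sum>a'\<in>S. if a' = a then G a' b else 0)"
    using assms by (intro sum.cong refl) (auto simp: if_distrib sum.delta cong: if_cong)
  also have "\<dots> = G a b" using assms by (simp add: sum.delta)
  finally show ?thesis .
qed

definition causal_prod :: "(nat \<Rightarrow> 'a list \<Rightarrow> 'b list \<Rightarrow> 'a \<Rightarrow> 'b \<Rightarrow> real) \<Rightarrow> nat \<Rightarrow> 'a list \<Rightarrow> 'b list \<Rightarrow> real"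
  where "causal_prod g m xs ys = (\<Prod>k<m. g k (take k xs) (take k ys) (xs ! k) (ys ! k))"

definition causal_prod_out :: "(nat \<Rightarrow> 'a list \<Rightarrow> 'b list \<Rightarrow> 'a \<Rightarrow> 'b \<Rightarrow> real) \<Rightarrow> nat \<Rightarrow> 'b list \<Rightarrow> real"
  where "causal_prod_out g m ys = (\<Sum>xs\<in>seqs m. causal_prod g m xs ys)"

lemma causal_prod_snoc:
  assumes "length a = i" "length b = i"
  shows "causal_prod g (Suc i) (a @ [x]) (b @ [y]) = causal_prod g i a b * g i a b x y"
  unfolding causal_prod_def using assms by (auto simp: nth_append intro!: prod.cong)

lemma causal_prod_nonneg: "(\<And>k a b x y. 0 \<le> g k a b x y) \<Longrightarrow> 0 \<le> causal_prod g m xs ys"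
  unfolding causal_prod_def by (simp add: prod_nonneg)

lemma causal_prod_le_out:
  fixes g :: "nat \<Rightarrow> 'a::finite list \<Rightarrow> 'b list \<Rightarrow> 'a \<Rightarrow> 'b \<Rightarrow> real"
  shows "(\<And>k a b x y. 0 \<le> g k a b x y) \<Longrightarrow> a \<in> seqs m \<Longrightarrow> causal_prod g m a b \<le> causal_prod_out g m b"
  unfolding causal_prod_out_def by (rule member_le_sum) (auto intro: causal_prod_nonneg)

context
  fixes g :: "nat \<Rightarrow> 'a::finite list \<Rightarrow> 'b::finite list \<Rightarrow> 'a \<Rightarrow> 'b \<Rightarrow> real"
  assumes g_sum: "\<And>k a b. (\<Sum>x\<in>UNIV. \<Sum>y\<in>UNIV. g k a b x y) = 1"
begin

lemma sum_causal_prod_append: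
  "length a = i \<Longrightarrow> length b = i \<Longrightarrow>
     (\<Sum>zs\<in>seqs m. \<Sum>ws\<in>seqs m. causal_prod g (i + m) (a @ zs) (b @ ws)) = causal_prod g i a b"
proof (induction m arbitrary: i a b)
  case 0
  then show ?case by simp
next
  case (Suc m)
  have "(\<Sum>zs\<in>seqs (Suc m). \<Sum>ws\<in>seqs (Suc m). causal_prod g (i + Suc m) (a @ zs) (b @ ws))
      = (\<Sum>x\<in>UNIV. \<Sum>y\<in>UNIV. \<Sum>zs\<in>seqs m. \<Sum>ws\<in>seqs m.
           causal_prod g (Suc i + m) ((a @ [x]) @ zs) ((b @ [y]) @ ws))"
    by (simp add: sum_seqs_Suc_Cons sum.swap[where A = "seqs m" and B = UNIV])
  also have "\<dots> = (\<Sum>x\<in>UNIV. \<Sum>y\<in>UNIV. causal_prod g (Suc i) (a @ [x]) (b @ [y]))"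
    using Suc.IH[of "a @ [x]" "Suc i" "b @ [y]" for x y] Suc.prems by simp
  also have "\<dots> = causal_prod g i a b"
    using Suc.prems g_sum by (simp add: causal_prod_snoc sum_distrib_left[symmetric])
  finally show ?case .
qed

lemma sum_causal_prod_take:
  assumes "i \<le> n"
  shows "(\<Sum>xs\<in>seqs n. \<Sum>ys\<in>seqs n. causal_prod g n xs ys * f (take i xs) (take i ys))
       = (\<Sum>a\<in>seqs i. \<Sum>b\<in>seqs i. causal_prod g i a b * f a b)"
proof -
  have "(\<Sum>xs\<in>seqs n. \<Sum>ys\<in>seqs n. causal_prod g n xs ys * f (take i xs) (take i ys))
      = (\<Sum>a\<in>seqs i. \<Sum>zs\<in>seqs (n - i). \<Sum>b\<in>seqs i. \<Sum>ws\<in>seqs (n - i).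
           causal_prod g n (a @ zs) (b @ ws) * f (take i (a @ zs)) (take i (b @ ws)))"
    by (simp only: sum_seqs_append[OF assms])
  also have "\<dots> = (\<Sum>a\<in>seqs i. \<Sum>zs\<in>seqs (n - i). \<Sum>b\<in>seqs i. \<Sum>ws\<in>seqs (n - i).
           causal_prod g (i + (n - i)) (a @ zs) (b @ ws) * f a b)"
    using assms by (intro sum.cong refl) (simp add: seqs_def)
  also have "\<dots> = (\<Sum>a\<in>seqs i. \<Sum>b\<in>seqs i. f a b *
      (\<Sum>zs\<in>seqs (n - i). \<Sum>ws\<in>seqs (n - i). causal_prod g (i + (n - i)) (a @ zs) (b @ ws)))"
    by (rule sum.cong[OF refl], subst sum.swap) (simp add: sum_distrib_left mult.commute)
  also have "\<dots> = (\<Sum>a\<in>seqs i. \<Sum>b\<in>seqs i. causal_prod g i a b * f a b)"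
  proof (intro sum.cong refl)
    fix a :: "'a list" and b :: "'b list"
    assume "a \<in> seqs i" "b \<in> seqs i"
    then show "f a b * (\<Sum>zs\<in>seqs (n - i). \<Sum>ws\<in>seqs (n - i). causal_prod g (i + (n - i)) (a @ zs) (b @ ws))
        = causal_prod g i a b * f a b"
      using sum_causal_prod_append[of a i b "n - i"] by (simp add: seqs_def)
  qed
  finally show ?thesis .
qed

context
  fixes J :: "'a list \<Rightarrow> 'b list \<Rightarrow> real" and n :: nat
  assumes J: "\<And>xs ys. xs \<in> seqs n \<Longrightarrow> ys \<in> seqs n \<Longrightarrow> J xs ys = causal_prod g n xs ys"
begin

lemma marg_causal_prod:
  assumes "i \<le> m" "j \<le> m" "m \<le> n"
  shows "marg n J i j a b = (\<Sum>a'\<in>seqs m. \<Sum>b'\<in>seqs m.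
           causal_prod g m a' b' * (if take i a' = a \<and> take j b' = b then 1 else 0))"
proof -
  have "marg n J i j a b = (\<Sum>xs\<in>seqs n. \<Sum>ys\<in>seqs n. causal_prod g n xs ys *
      (\<lambda>a' b'. if take i a' = a \<and> take j b' = b then 1 else 0) (take m xs) (take m ys))"
    unfolding marg_def using assms by (intro sum.cong refl) (auto simp: J min_def)
  also have "\<dots> = (\<Sum>a'\<in>seqs m. \<Sum>b'\<in>seqs m.
           causal_prod g m a' b' * (if take i a' = a \<and> take j b' = b then 1 else 0))"
    by (rule sum_causal_prod_take[OF assms(3)])
  finally show ?thesis .
qed

lemma marg_causal_prod_diag:
  assumes "a \<in> seqs i" "b \<in> seqs i" "i \<le> n"
  shows "marg n J i i a b = causal_prod g i a b"
proof -
  have "marg n J i i a b = (\<Sum>a'\<in>seqs i. \<Sum>b'\<in>seqs i.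
          causal_prod g i a' b' * (if a' = a \<and> b' = b then 1 else 0))"
    using assms by (simp add: marg_causal_prod[of i i i] seqs_def cong: if_cong)
  also have "\<dots> = causal_prod g i a b"
    using assms by (intro sum_sum_indicator) auto
  finally show ?thesis .
qed

lemma marg_causal_prod_out:
  assumes "b \<in> seqs j" "j \<le> n"
  shows "marg n J 0 j [] b = causal_prod_out g j b"
proof -
  have "marg n J 0 j [] b = (\<Sum>a'\<in>seqs j. \<Sum>b'\<in>seqs j.
          causal_prod g j a' b' * (if b' = b then 1 else 0))"
    using assms by (simp add: marg_causal_prod[of 0 j j] seqs_def cong: if_cong)
  also have "\<dots> = causal_prod_out g j b"
    using assms unfolding causal_prod_out_def
    by (intro sum.cong refl) (auto simp: if_distrib sum.delta cong: if_cong)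
  finally show ?thesis .
qed

lemma marg_causal_prod_snoc_input:
  assumes "a \<in> seqs k" "b \<in> seqs k" "Suc k \<le> n"
  shows "marg n J (Suc k) k (a @ [x]) b = (\<Sum>y\<in>UNIV. causal_prod g k a b * g k a b x y)"
proof -
  have "marg n J (Suc k) k (a @ [x]) b = (\<Sum>a'\<in>seqs (Suc k). \<Sum>b'\<in>seqs k. \<Sum>y\<in>UNIV.
          causal_prod g (Suc k) a' (b' @ [y]) * (if a' = a @ [x] \<and> b' = b then 1 else 0))"
  proof -
    have "marg n J (Suc k) k (a @ [x]) b = (\<Sum>a'\<in>seqs (Suc k). \<Sum>b'\<in>seqs (Suc k).
          causal_prod g (Suc k) a' b' * (if take (Suc k) a' = a @ [x] \<and> take k b' = b then 1 else 0))"
      using assms by (simp add: marg_causal_prod[of "Suc k" "Suc k" k])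
    also have "\<dots> = (\<Sum>a'\<in>seqs (Suc k). \<Sum>b'\<in>seqs k. \<Sum>y\<in>UNIV.
          causal_prod g (Suc k) a' (b' @ [y]) * (if a' = a @ [x] \<and> b' = b then 1 else 0))"
      by (rule sum.cong[OF refl], subst sum_seqs_Suc_snoc, intro sum.cong refl) (auto simp: seqs_def)
    finally show ?thesis .
  qed
  also have "\<dots> = (\<Sum>a'\<in>seqs (Suc k). \<Sum>b'\<in>seqs k.
          (\<Sum>y\<in>UNIV. causal_prod g (Suc k) a' (b' @ [y])) * (if a' = a @ [x] \<and> b' = b then 1 else 0))"
    by (simp add: sum_distrib_right)
  also have "\<dots> = (\<Sum>y\<in>UNIV. causal_prod g (Suc k) (a @ [x]) (b @ [y]))"
    using assms by (intro sum_sum_indicator finite_seqs) (auto simp: seqs_def)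
  also have "\<dots> = (\<Sum>y\<in>UNIV. causal_prod g k a b * g k a b x y)"
    using assms by (simp add: causal_prod_snoc seqs_def)
  finally show ?thesis .
qed

end

end

definition joint_kernel :: "(nat \<Rightarrow> 'a list \<Rightarrow> 'b list \<Rightarrow> 'a \<Rightarrow> real) \<Rightarrow> (nat \<Rightarrow> 'b list \<Rightarrow> 'a list \<Rightarrow> 'b \<Rightarrow> real)
    \<Rightarrow> nat \<Rightarrow> 'a list \<Rightarrow> 'b list \<Rightarrow> 'a \<Rightarrow> 'b \<Rightarrow> real"
  where "joint_kernel r q k a b x y = r k a b x * q k b (a @ [x]) y"

context
  fixes r :: "nat \<Rightarrow> 'a::finite list \<Rightarrow> 'b::finite list \<Rightarrow> 'a \<Rightarrow> real"
    and q :: "nat \<Rightarrow> 'b list \<Rightarrow> 'a list \<Rightarrow> 'b \<Rightarrow> real"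
    and J :: "'a list \<Rightarrow> 'b list \<Rightarrow> real" and n :: nat
  assumes r_nonneg: "\<And>i xs ys x. 0 \<le> r i xs ys x" and r_sum: "\<And>i xs ys. (\<Sum>x\<in>UNIV. r i xs ys x) = 1"
    and q_nonneg: "\<And>i ys xs y. 0 \<le> q i ys xs y" and q_sum: "\<And>i ys xs. (\<Sum>y\<in>UNIV. q i ys xs y) = 1"
    and J: "\<And>xs ys. xs \<in> seqs n \<Longrightarrow> ys \<in> seqs n \<Longrightarrow> J xs ys = causal_prod (joint_kernel r q) n xs ys"
begin

lemma joint_kernel_sum: "(\<Sum>x\<in>UNIV. \<Sum>y\<in>UNIV. joint_kernel r q k a b x y) = 1"
  by (simp add: joint_kernel_def sum_distrib_left[symmetric] q_sum r_sum)

lemma joint_kernel_nonneg: "0 \<le> joint_kernel r q k a b x y"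
  by (simp add: joint_kernel_def r_nonneg q_nonneg)

text \<open>In the \<open>k\<close>-th conditional mutual information the input factor \<open>r\<close> cancels, leaving the
  channel factor \<open>q\<close> and a ratio of consecutive output marginals.\<close>

lemma cmi_summand_joint_kernel:
  assumes k: "k < n" and a: "a \<in> seqs (Suc k)" and b: "b \<in> seqs (Suc k)"
  shows "marg n J (Suc k) (Suc k) a b *
      log 2 ((marg n J (Suc k) (Suc k) a b * marg n J 0 (Suc k - 1) [] (take (Suc k - 1) b)) /
             (marg n J (Suc k) (Suc k - 1) a (take (Suc k - 1) b) * marg n J 0 (Suc k) [] b))
    = causal_prod (joint_kernel r q) (Suc k) a b *
      (log 2 (q k (take k b) a (b ! k)) + log 2 (causal_prod_out (joint_kernel r q) k (take k b))
        - log 2 (causal_prod_out (joint_kernel r q) (Suc k) b))"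
proof -
  obtain a0 x where a_snoc: "a = a0 @ [x]" and a0: "a0 \<in> seqs k"
    using a by (auto simp: seqs_def length_Suc_conv_rev)
  obtain b0 y where b_snoc: "b = b0 @ [y]" and b0: "b0 \<in> seqs k"
    using b by (auto simp: seqs_def length_Suc_conv_rev)
  have len: "length a0 = k" "length b0 = k" using a0 b0 by (auto simp: seqs_def)
  define G where "G = causal_prod (joint_kernel r q) k a0 b0"
  define R where "R = r k a0 b0 x"
  define Q where "Q = q k b0 (a0 @ [x]) y"
  define P where "P = causal_prod_out (joint_kernel r q) k b0"
  define P' where "P' = causal_prod_out (joint_kernel r q) (Suc k) b"
  have prod_ab: "causal_prod (joint_kernel r q) (Suc k) a b = G * (R * Q)"
    by (simp add: a_snoc b_snoc causal_prod_snoc len G_def R_def Q_def joint_kernel_def)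
  have "marg n J (Suc k) (Suc k) a b = G * (R * Q)"
    using marg_causal_prod_diag[OF joint_kernel_sum J a b] k prod_ab by simp
  moreover have "marg n J 0 (Suc k - 1) [] (take (Suc k - 1) b) = P"
    using marg_causal_prod_out[OF joint_kernel_sum J b0] k by (simp add: b_snoc len P_def)
  moreover have "marg n J (Suc k) (Suc k - 1) a (take (Suc k - 1) b) = G * R"
    using marg_causal_prod_snoc_input[OF joint_kernel_sum J a0 b0, of x] k
    by (simp add: a_snoc b_snoc len G_def R_def joint_kernel_def sum_distrib_left[symmetric] q_sum)
  moreover have "marg n J 0 (Suc k) [] b = P'"
    using marg_causal_prod_out[OF joint_kernel_sum J b] k by (simp add: P'_def)
  moreover have "q k (take k b) a (b ! k) = Q" "take k b = b0"
    by (simp_all add: Q_def a_snoc b_snoc len nth_append)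
  ultimately have lhs: "?thesis \<longleftrightarrow>
      G * (R * Q) * log 2 ((G * (R * Q) * P) / (G * R * P')) = G * (R * Q) * (log 2 Q + log 2 P - log 2 P')"
    unfolding prod_ab P_def P'_def by simp
  show ?thesis
  proof (cases "G * (R * Q) = 0")
    case True
    then show ?thesis unfolding lhs by simp
  next
    case False
    have "0 \<le> G" "0 \<le> R" "0 \<le> Q"
      by (auto simp: G_def R_def Q_def causal_prod_nonneg joint_kernel_nonneg r_nonneg q_nonneg)
    with False have pos: "0 < G" "0 < R" "0 < Q" by (auto simp: less_le)
    have "G \<le> P" unfolding G_def P_def by (rule causal_prod_le_out[OF joint_kernel_nonneg a0])
    then have "0 < P" using pos by simp
    moreover have "G * (R * Q) \<le> P'"
      unfolding P'_def prod_ab[symmetric] by (rule causal_prod_le_out[OF joint_kernel_nonneg a])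
    then have "0 < P'" using pos by (smt (verit) mult_pos_pos)
    ultimately have "log 2 ((G * (R * Q) * P) / (G * R * P')) = log 2 Q + log 2 P - log 2 P'"
      using pos by (simp add: log_mult log_divide field_simps)
    then show ?thesis unfolding lhs by simp
  qed
qed

lemma cmi_term_Suc_joint_kernel:
  assumes k: "k < n"
  shows "cmi_term n J (Suc k) = (\<Sum>xs\<in>seqs n. \<Sum>ys\<in>seqs n. causal_prod (joint_kernel r q) n xs ys *
     (log 2 (q k (take k ys) (take (Suc k) xs) (ys ! k))
       + log 2 (causal_prod_out (joint_kernel r q) k (take k ys))
       - log 2 (causal_prod_out (joint_kernel r q) (Suc k) (take (Suc k) ys))))"
proof -
  define F where "F a b = log 2 (q k (take k b) a (b ! k))
    + log 2 (causal_prod_out (joint_kernel r q) k (take k b))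
    - log 2 (causal_prod_out (joint_kernel r q) (Suc k) b)" for a b
  have "cmi_term n J (Suc k) = (\<Sum>a\<in>seqs (Suc k). \<Sum>b\<in>seqs (Suc k). causal_prod (joint_kernel r q) (Suc k) a b * F a b)"
    unfolding cmi_term_def F_def using k by (intro sum.cong refl cmi_summand_joint_kernel) auto
  also have "\<dots> = (\<Sum>xs\<in>seqs n. \<Sum>ys\<in>seqs n.
      causal_prod (joint_kernel r q) n xs ys * F (take (Suc k) xs) (take (Suc k) ys))"
    using k by (intro sum_causal_prod_take[OF joint_kernel_sum, symmetric]) auto
  finally show ?thesis
    using k by (simp add: F_def seqs_def min_def cong: sum.cong)
qed

text \<open>Summing over \<open>k\<close>, the output terms telescope.\<close>

lemma sum_cmi_term_joint_kernel:
  "(\<Sum>i=1..n. cmi_term n J i) =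
     (\<Sum>xs\<in>seqs n. \<Sum>ys\<in>seqs n. causal_prod (joint_kernel r q) n xs ys *
       (\<Sum>k<n. log 2 (q k (take k ys) (take (Suc k) xs) (ys ! k))))
   - (\<Sum>xs\<in>seqs n. \<Sum>ys\<in>seqs n. causal_prod (joint_kernel r q) n xs ys *
       log 2 (causal_prod_out (joint_kernel r q) n ys))"
proof -
  define A where "A k = (\<Sum>xs\<in>seqs n. \<Sum>ys\<in>seqs n. causal_prod (joint_kernel r q) n xs ys *
    log 2 (q k (take k ys) (take (Suc k) xs) (ys ! k)))" for k
  define B where "B j = (\<Sum>xs\<in>seqs n. \<Sum>ys\<in>seqs n. causal_prod (joint_kernel r q) n xs ys *
    log 2 (causal_prod_out (joint_kernel r q) j (take j ys)))" for j
  have cmi: "cmi_term n J (Suc k) = A k + (B k - B (Suc k))" if "k < n" for k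
    unfolding cmi_term_Suc_joint_kernel[OF that] A_def B_def
    by (simp add: ring_distribs sum.distrib sum_subtractf)
  have "(\<Sum>i=1..n. cmi_term n J i) = (\<Sum>k<n. cmi_term n J (Suc k))"
    by (simp add: sum.atLeast1_atMost_eq)
  also have "\<dots> = (\<Sum>k<n. A k) + (\<Sum>k<n. B k - B (Suc k))"
    by (simp add: cmi sum.distrib)
  also have "(\<Sum>k<n. B k - B (Suc k)) = B 0 - B n"
    by (rule sum_lessThan_telescope')
  also have "B 0 = 0"
    by (simp add: B_def causal_prod_out_def causal_prod_def)
  also have "B n = (\<Sum>xs\<in>seqs n. \<Sum>ys\<in>seqs n. causal_prod (joint_kernel r q) n xs ys *
      log 2 (causal_prod_out (joint_kernel r q) n ys))"
    unfolding B_def by (intro sum.cong refl) (auto simp: seqs_def)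
  also have "(\<Sum>k<n. A k) = (\<Sum>xs\<in>seqs n. \<Sum>ys\<in>seqs n. causal_prod (joint_kernel r q) n xs ys *
       (\<Sum>k<n. log 2 (q k (take k ys) (take (Suc k) xs) (ys ! k))))"
    unfolding A_def by (simp add: sum_distrib_left sum.swap[of _ "{..<n}"])
  finally show ?thesis by simp
qed

end

lemma dirinfo_chain_rule:
  fixes W :: "'x::finite list \<Rightarrow> 'y::finite list \<Rightarrow> real"
  assumes "ccond_chan n W"
  obtains h where "\<And>Q. ccond_input n Q \<Longrightarrow> dirinfo n Q W =
     (\<Sum>xs\<in>seqs n. \<Sum>ys\<in>seqs n. Q xs ys * W xs ys * h xs ys)
   - (\<Sum>xs\<in>seqs n. \<Sum>ys\<in>seqs n. Q xs ys * W xs ys * log 2 (\<Sum>xs'\<in>seqs n. Q xs' ys * W xs' ys))"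
proof -
  obtain q :: "nat \<Rightarrow> 'y list \<Rightarrow> 'x list \<Rightarrow> 'y \<Rightarrow> real" where
    q_nonneg: "\<And>i ys xs y. 0 \<le> q i ys xs y" and q_sum: "\<And>i ys xs. (\<Sum>y\<in>UNIV. q i ys xs y) = 1" and
    W: "\<And>xs ys. xs \<in> seqs n \<Longrightarrow> ys \<in> seqs n \<Longrightarrow> W xs ys = (\<Prod>i<n. q i (take i ys) (take (Suc i) xs) (ys ! i))"
    using assms unfolding ccond_chan_def by blast
  define h where "h xs ys = (\<Sum>k<n. log 2 (q k (take k ys) (take (Suc k) xs) (ys ! k)))" for xs ys
  show ?thesis
  proof (rule that)
    fix Q :: "'x list \<Rightarrow> 'y list \<Rightarrow> real"
    assume "ccond_input n Q"
    then obtain r :: "nat \<Rightarrow> 'x list \<Rightarrow> 'y list \<Rightarrow> 'x \<Rightarrow> real" where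
      r_nonneg: "\<And>i xs ys x. 0 \<le> r i xs ys x" and r_sum: "\<And>i xs ys. (\<Sum>x\<in>UNIV. r i xs ys x) = 1" and
      Q: "\<And>xs ys. xs \<in> seqs n \<Longrightarrow> ys \<in> seqs n \<Longrightarrow> Q xs ys = (\<Prod>i<n. r i (take i xs) (take i ys) (xs ! i))"
      unfolding ccond_input_def by blast
    have J: "Q xs ys * W xs ys = causal_prod (joint_kernel r q) n xs ys"
      if "xs \<in> seqs n" "ys \<in> seqs n" for xs ys
      using that unfolding causal_prod_def joint_kernel_def
      by (simp add: Q W prod.distrib[symmetric] seqs_def take_Suc_conv_app_nth)
    have out: "causal_prod_out (joint_kernel r q) n ys = (\<Sum>xs'\<in>seqs n. Q xs' ys * W xs' ys)"
      if "ys \<in> seqs n" for ys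
      unfolding causal_prod_out_def using that by (intro sum.cong refl) (simp add: J)
    have "dirinfo n Q W = (\<Sum>i=1..n. cmi_term n (\<lambda>xs ys. Q xs ys * W xs ys) i)"
      unfolding dirinfo_def ..
    also have "\<dots> = (\<Sum>xs\<in>seqs n. \<Sum>ys\<in>seqs n. causal_prod (joint_kernel r q) n xs ys *
         (\<Sum>k<n. log 2 (q k (take k ys) (take (Suc k) xs) (ys ! k))))
       - (\<Sum>xs\<in>seqs n. \<Sum>ys\<in>seqs n. causal_prod (joint_kernel r q) n xs ys *
         log 2 (causal_prod_out (joint_kernel r q) n ys))"
      by (rule sum_cmi_term_joint_kernel[OF r_nonneg r_sum q_nonneg q_sum J])
    also have "\<dots> = (\<Sum>xs\<in>seqs n. \<Sum>ys\<in>seqs n. Q xs ys * W xs ys * h xs ys)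
       - (\<Sum>xs\<in>seqs n. \<Sum>ys\<in>seqs n. Q xs ys * W xs ys * log 2 (\<Sum>xs'\<in>seqs n. Q xs' ys * W xs' ys))"
      unfolding h_def by (intro arg_cong2[where f = "(-)"] sum.cong refl) (simp_all add: J out)
    finally show "dirinfo n Q W = (\<Sum>xs\<in>seqs n. \<Sum>ys\<in>seqs n. Q xs ys * W xs ys * h xs ys)
      - (\<Sum>xs\<in>seqs n. \<Sum>ys\<in>seqs n. Q xs ys * W xs ys * log 2 (\<Sum>xs'\<in>seqs n. Q xs' ys * W xs' ys))" .
  qed
qed

text \<open>Causal conditioning inputs are characterised by conditions that are linear in \<open>Q\<close>:
  nonnegativity, and marginals on \<open>x\<^sup>k\<close> that have total mass 1 and depend on \<open>y\<^sup>n\<close> only through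
  \<open>y\<^sup>k\<^sup>-\<^sup>1\<close>.\<close>

definition prefix_mass :: "nat \<Rightarrow> ('x list \<Rightarrow> 'y list \<Rightarrow> real) \<Rightarrow> nat \<Rightarrow> 'x list \<Rightarrow> 'y list \<Rightarrow> real"
  where "prefix_mass n Q k a ys = (\<Sum>zs\<in>seqs (n - k). Q (a @ zs) ys)"

definition causally_consistent :: "nat \<Rightarrow> ('x list \<Rightarrow> 'y list \<Rightarrow> real) \<Rightarrow> bool" where
  "causally_consistent n Q \<longleftrightarrow>
     (\<forall>xs\<in>seqs n. \<forall>ys\<in>seqs n. 0 \<le> Q xs ys) \<and> (\<forall>ys\<in>seqs n. prefix_mass n Q 0 [] ys = 1) \<and>
     (\<forall>k<n. \<forall>a\<in>seqs k. \<forall>x. \<forall>ys\<in>seqs n. \<forall>ys'\<in>seqs n. take k ys = take k ys' \<longrightarrow>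
        prefix_mass n Q (Suc k) (a @ [x]) ys = prefix_mass n Q (Suc k) (a @ [x]) ys')"

lemma prefix_mass_Suc:
  fixes Q :: "'x::finite list \<Rightarrow> 'y list \<Rightarrow> real"
  assumes "k < n"
  shows "prefix_mass n Q k a ys = (\<Sum>x\<in>UNIV. prefix_mass n Q (Suc k) (a @ [x]) ys)"
proof -
  have "n - k = Suc (n - Suc k)" using assms by simp
  then show ?thesis unfolding prefix_mass_def by (simp add: sum_seqs_Suc_Cons)
qed

lemma prefix_mass_nonneg:
  "(\<And>xs ys. xs \<in> seqs n \<Longrightarrow> ys \<in> seqs n \<Longrightarrow> 0 \<le> Q xs ys) \<Longrightarrow> a \<in> seqs k \<Longrightarrow> k \<le> n \<Longrightarrow> ys \<in> seqs n
   \<Longrightarrow> 0 \<le> prefix_mass n Q k a ys"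
  unfolding prefix_mass_def by (intro sum_nonneg) (auto simp: seqs_def)

definition input_prod :: "(nat \<Rightarrow> 'x list \<Rightarrow> 'y list \<Rightarrow> 'x \<Rightarrow> real) \<Rightarrow> nat \<Rightarrow> 'x list \<Rightarrow> 'y list \<Rightarrow> real"
  where "input_prod r m xs ys = (\<Prod>k<m. r k (take k xs) (take k ys) (xs ! k))"

lemma input_prod_snoc:
  "length a = i \<Longrightarrow> input_prod r (Suc i) (a @ [x]) ys = input_prod r i a ys * r i a (take i ys) x"
  unfolding input_prod_def by (auto simp: nth_append intro!: prod.cong)

lemma sum_input_prod_append:
  fixes r :: "nat \<Rightarrow> 'x::finite list \<Rightarrow> 'y list \<Rightarrow> 'x \<Rightarrow> real"
  assumes r_sum: "\<And>i xs ys. (\<Sum>x\<in>UNIV. r i xs ys x) = 1"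
  shows "length a = i \<Longrightarrow> (\<Sum>zs\<in>seqs m. input_prod r (i + m) (a @ zs) ys) = input_prod r i a ys"
proof (induction m arbitrary: i a)
  case 0
  then show ?case by simp
next
  case (Suc m)
  have "(\<Sum>zs\<in>seqs (Suc m). input_prod r (i + Suc m) (a @ zs) ys)
      = (\<Sum>x\<in>UNIV. \<Sum>zs\<in>seqs m. input_prod r (Suc i + m) ((a @ [x]) @ zs) ys)"
    by (simp add: sum_seqs_Suc_Cons)
  also have "\<dots> = (\<Sum>x\<in>UNIV. input_prod r (Suc i) (a @ [x]) ys)"
    using Suc.IH[of "a @ [x]" "Suc i" for x] Suc.prems by simp
  also have "\<dots> = input_prod r i a ys"
    using Suc.prems by (simp add: input_prod_snoc sum_distrib_left[symmetric] r_sum)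
  finally show ?case .
qed

lemma ccond_input_imp_causally_consistent:
  fixes Q :: "'x::finite list \<Rightarrow> 'y::finite list \<Rightarrow> real"
  assumes "ccond_input n Q"
  shows "causally_consistent n Q"
proof -
  obtain r :: "nat \<Rightarrow> 'x list \<Rightarrow> 'y list \<Rightarrow> 'x \<Rightarrow> real" where
    r_nonneg: "\<And>i xs ys x. 0 \<le> r i xs ys x" and r_sum: "\<And>i xs ys. (\<Sum>x\<in>UNIV. r i xs ys x) = 1" and
    Q: "\<And>xs ys. xs \<in> seqs n \<Longrightarrow> ys \<in> seqs n \<Longrightarrow> Q xs ys = input_prod r n xs ys"
    using assms unfolding ccond_input_def input_prod_def by blast
  have mass: "prefix_mass n Q k a ys = input_prod r k a ys" if "k \<le> n" "a \<in> seqs k" "ys \<in> seqs n" for k a ys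
  proof -
    have "prefix_mass n Q k a ys = (\<Sum>zs\<in>seqs (n - k). input_prod r (k + (n - k)) (a @ zs) ys)"
      unfolding prefix_mass_def using that by (intro sum.cong refl) (auto simp: Q seqs_def)
    also have "\<dots> = input_prod r k a ys"
      using that sum_input_prod_append[OF r_sum, where a = a and i = k and m = "n - k" and ys = ys] by (simp add: seqs_def)
    finally show ?thesis .
  qed
  have causal: "input_prod r (Suc k) (a @ [x]) ys = input_prod r (Suc k) (a @ [x]) ys'"
    if "take k ys = take k ys'" for k a x and ys ys' :: "'y list"
    unfolding input_prod_def
  proof (rule prod.cong[OF refl])
    fix i assume "i \<in> {..<Suc k}"
    then have "take i ys = take i ys'" using that by (metis lessThan_iff less_Suc_eq_le min_def take_take)
    then show "r i (take i (a @ [x])) (take i ys) ((a @ [x]) ! i)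
             = r i (take i (a @ [x])) (take i ys') ((a @ [x]) ! i)" by simp
  qed
  show ?thesis unfolding causally_consistent_def
  proof (intro conjI ballI allI impI)
    fix xs :: "'x list" and ys :: "'y list"
    assume "xs \<in> seqs n" "ys \<in> seqs n"
    then show "0 \<le> Q xs ys" by (simp add: Q input_prod_def prod_nonneg r_nonneg)
  next
    fix ys :: "'y list"
    assume "ys \<in> seqs n"
    then show "prefix_mass n Q 0 [] ys = 1" by (simp add: mass input_prod_def)
  next
    fix k and a :: "'x list" and x and ys ys' :: "'y list"
    assume "k < n" "a \<in> seqs k" "ys \<in> seqs n" "ys' \<in> seqs n" "take k ys = take k ys'"
    moreover have "a @ [x] \<in> seqs (Suc k)" using \<open>a \<in> seqs k\<close> by (simp add: seqs_def)
    ultimately show "prefix_mass n Q (Suc k) (a @ [x]) ys = prefix_mass n Q (Suc k) (a @ [x]) ys'"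
      using causal[of k ys ys' a x] by (simp add: mass)
  qed
qed

text \<open>Conversely, \<open>Q(x\<^sub>k | x\<^sup>k, y\<^sup>k)\<close> is recovered as a ratio of prefix masses; \<open>b\<close> is padded
  arbitrarily to length \<open>n\<close>, which does not matter by causality, and the kernel is uniform where
  the denominator vanishes.\<close>

definition cond_input_kernel :: "nat \<Rightarrow> ('x::finite list \<Rightarrow> 'y list \<Rightarrow> real) \<Rightarrow> nat \<Rightarrow> 'x list \<Rightarrow> 'y list \<Rightarrow> 'x \<Rightarrow> real"
  where "cond_input_kernel n Q k a b x =
    (if length a = k \<and> length b = k \<and> k < n \<and> prefix_mass n Q k a (b @ replicate (n - k) undefined) \<noteq> 0
     then prefix_mass n Q (Suc k) (a @ [x]) (b @ replicate (n - k) undefined)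
          / prefix_mass n Q k a (b @ replicate (n - k) undefined)
     else 1 / real (card (UNIV :: 'x set)))"

context
  fixes n :: nat and Q :: "'x::finite list \<Rightarrow> 'y::finite list \<Rightarrow> real"
  assumes causal: "causally_consistent n Q"
begin

lemma causally_consistent_nonneg: "xs \<in> seqs n \<Longrightarrow> ys \<in> seqs n \<Longrightarrow> 0 \<le> Q xs ys"
  using causal unfolding causally_consistent_def by blast

lemma prefix_mass_0: "ys \<in> seqs n \<Longrightarrow> prefix_mass n Q 0 [] ys = 1"
  using causal unfolding causally_consistent_def by blast

lemma prefix_mass_Suc_take_eq:
  assumes "k < n" "a \<in> seqs k" "ys \<in> seqs n" "ys' \<in> seqs n" "take k ys = take k ys'"
  shows "prefix_mass n Q (Suc k) (a @ [x]) ys = prefix_mass n Q (Suc k) (a @ [x]) ys'"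
  using causal assms unfolding causally_consistent_def by blast

lemma prefix_mass_take_eq:
  assumes "k \<le> n" "a \<in> seqs k" "ys \<in> seqs n" "ys' \<in> seqs n" "take k ys = take k ys'"
  shows "prefix_mass n Q k a ys = prefix_mass n Q k a ys'"
proof (cases k)
  case 0
  then show ?thesis using assms by (simp add: prefix_mass_0 seqs_def)
next
  case (Suc j)
  then obtain a0 x where "a = a0 @ [x]" "a0 \<in> seqs j"
    using assms(2) by (auto simp: seqs_def length_Suc_conv_rev)
  moreover have "take j ys = take j ys'"
    using assms(5) Suc by (metis le_add2 plus_1_eq_Suc min_def take_take)
  ultimately show ?thesis
    using prefix_mass_Suc_take_eq[of j a0 ys ys'] assms(1,3,4) Suc by simp
qed

lemma cond_input_kernel_nonneg: "0 \<le> cond_input_kernel n Q k a b x"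
proof (cases "length a = k \<and> length b = k \<and> k < n")
  case True
  then have "b @ replicate (n - k) undefined \<in> seqs n" by (simp add: seqs_def)
  then have "0 \<le> prefix_mass n Q (Suc k) (a @ [x]) (b @ replicate (n - k) undefined)"
    "0 \<le> prefix_mass n Q k a (b @ replicate (n - k) undefined)"
    using True by (auto intro!: prefix_mass_nonneg causally_consistent_nonneg simp: seqs_def)
  then show ?thesis unfolding cond_input_kernel_def by simp
next
  case False
  then show ?thesis unfolding cond_input_kernel_def by auto
qed

lemma cond_input_kernel_sum: "(\<Sum>x\<in>UNIV. cond_input_kernel n Q k a b x) = 1"
proof (cases "length a = k \<and> length b = k \<and> k < n \<and> prefix_mass n Q k a (b @ replicate (n - k) undefined) \<noteq> 0")
  case True
  then show ?thesis unfolding cond_input_kernel_def if_P[OF True]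
    by (simp add: sum_divide_distrib[symmetric] prefix_mass_Suc[symmetric])
next
  case False
  then show ?thesis unfolding cond_input_kernel_def if_not_P[OF False] by simp
qed

lemma prod_cond_input_kernel:
  assumes xs: "xs \<in> seqs n" and ys: "ys \<in> seqs n"
  shows "m \<le> n \<Longrightarrow> (\<Prod>k<m. cond_input_kernel n Q k (take k xs) (take k ys) (xs ! k)) = prefix_mass n Q m (take m xs) ys"
proof (induction m)
  case 0
  then show ?case using ys by (simp add: prefix_mass_0)
next
  case (Suc m)
  define ys0 where "ys0 = take m ys @ replicate (n - m) undefined"
  have m: "m < n" using Suc by simp
  have a: "take m xs \<in> seqs m" using m xs by (simp add: seqs_def)
  have ys0: "ys0 \<in> seqs n" "take m ys0 = take m ys" using m ys by (auto simp: ys0_def seqs_def)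
  have x: "take (Suc m) xs = take m xs @ [xs ! m]" using m xs by (simp add: seqs_def take_Suc_conv_app_nth)
  have prefix_Suc: "prefix_mass n Q (Suc m) (take m xs @ [x']) ys0 = prefix_mass n Q (Suc m) (take m xs @ [x']) ys" for x'
    by (rule prefix_mass_Suc_take_eq[OF m a ys0(1) ys ys0(2)])
  have prefix: "prefix_mass n Q m (take m xs) ys0 = prefix_mass n Q m (take m xs) ys"
    using prefix_mass_take_eq[OF _ a ys0(1) ys ys0(2)] m by simp
  show ?case
  proof (cases "prefix_mass n Q m (take m xs) ys = 0")
    case True
    have "\<forall>x'\<in>UNIV. 0 \<le> prefix_mass n Q (Suc m) (take m xs @ [x']) ys"
      using m a ys causally_consistent_nonneg by (auto intro!: prefix_mass_nonneg simp: seqs_def)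
    moreover have "(\<Sum>x'\<in>UNIV. prefix_mass n Q (Suc m) (take m xs @ [x']) ys) = 0"
      using True prefix_mass_Suc[OF m, of Q "take m xs" ys] by simp
    ultimately have "prefix_mass n Q (Suc m) (take m xs @ [xs ! m]) ys = 0"
      by (simp add: sum_nonneg_eq_0_iff)
    then show ?thesis using Suc True by (simp add: x)
  next
    case False
    then have "cond_input_kernel n Q m (take m xs) (take m ys) (xs ! m)
        = prefix_mass n Q (Suc m) (take m xs @ [xs ! m]) ys / prefix_mass n Q m (take m xs) ys"
      using a ys m prefix prefix_Suc by (simp add: cond_input_kernel_def seqs_def ys0_def)
    then show ?thesis using Suc False by (simp add: x)
  qed
qed

lemma causally_consistent_imp_ccond_input: "ccond_input n Q"
  unfolding ccond_input_def
proof (intro exI[of _ "cond_input_kernel n Q"] conjI allI ballI cond_input_kernel_nonneg cond_input_kernel_sum)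
  fix xs :: "'x list" and ys :: "'y list"
  assume xs: "xs \<in> seqs n" and ys: "ys \<in> seqs n"
  then have "prefix_mass n Q n (take n xs) ys = Q xs ys" by (simp add: prefix_mass_def seqs_def)
  then show "Q xs ys = (\<Prod>i<n. cond_input_kernel n Q i (take i xs) (take i ys) (xs ! i))"
    using prod_cond_input_kernel[OF xs ys] by simp
qed

end

lemma ccond_input_iff_causally_consistent:
  fixes Q :: "'x::finite list \<Rightarrow> 'y::finite list \<Rightarrow> real"
  shows "ccond_input n Q \<longleftrightarrow> causally_consistent n Q"
  using ccond_input_imp_causally_consistent causally_consistent_imp_ccond_input by blast

lemma ccond_input_affine:
  fixes Q1 Q2 :: "'x::finite list \<Rightarrow> 'y::finite list \<Rightarrow> real"
  assumes "ccond_input n Q1" "ccond_input n Q2" "c1 + c2 = 1"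
    and "\<forall>xs\<in>seqs n. \<forall>ys\<in>seqs n. 0 \<le> c1 * Q1 xs ys + c2 * Q2 xs ys"
  shows "ccond_input n (\<lambda>xs ys. c1 * Q1 xs ys + c2 * Q2 xs ys)"
proof -
  have mass: "prefix_mass n (\<lambda>xs ys. c1 * Q1 xs ys + c2 * Q2 xs ys) k a ys
      = c1 * prefix_mass n Q1 k a ys + c2 * prefix_mass n Q2 k a ys" for k a ys
    unfolding prefix_mass_def by (simp add: sum.distrib sum_distrib_left)
  have c1: "causally_consistent n Q1" and c2: "causally_consistent n Q2"
    using assms(1,2) by (simp_all add: ccond_input_iff_causally_consistent)
  show ?thesis
    unfolding ccond_input_iff_causally_consistent causally_consistent_def mass
  proof (intro conjI ballI allI impI)
    fix ys :: "'y list" assume "ys \<in> seqs n"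
    then show "c1 * prefix_mass n Q1 0 [] ys + c2 * prefix_mass n Q2 0 [] ys = 1"
      using assms(3) by (simp add: prefix_mass_0[OF c1] prefix_mass_0[OF c2])
  next
    fix k and a :: "'x list" and x and ys ys' :: "'y list"
    assume prems: "k < n" "a \<in> seqs k" "ys \<in> seqs n" "ys' \<in> seqs n" "take k ys = take k ys'"
    then show "c1 * prefix_mass n Q1 (Suc k) (a @ [x]) ys + c2 * prefix_mass n Q2 (Suc k) (a @ [x]) ys
             = c1 * prefix_mass n Q1 (Suc k) (a @ [x]) ys' + c2 * prefix_mass n Q2 (Suc k) (a @ [x]) ys'"
      using prefix_mass_Suc_take_eq[OF c1 prems] prefix_mass_Suc_take_eq[OF c2 prems] by simp
  qed (use assms(4) in blast)
qed

lemma ccond_input_of_pmf: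
  fixes P :: "'x::finite list \<Rightarrow> real"
  assumes "is_pmf_seq n P"
  shows "ccond_input n (\<lambda>xs (ys :: 'y::finite list). P xs)"
  using assms unfolding ccond_input_iff_causally_consistent causally_consistent_def is_pmf_seq_def
  by (auto simp: prefix_mass_def)

lemma ccond_input_le_1:
  assumes "ccond_input n Q" "xs \<in> seqs n" "ys \<in> seqs n"
  shows "Q xs ys \<le> 1"
proof -
  obtain r where r_nonneg: "\<And>i xs ys x. 0 \<le> r i xs ys x" and r_sum: "\<And>i xs ys. (\<Sum>x\<in>UNIV. r i xs ys x) = 1"
    and Q: "Q xs ys = (\<Prod>i<n. r i (take i xs) (take i ys) (xs ! i))"
    using assms unfolding ccond_input_def by blast
  have "r i a b x \<le> 1" for i a b x
    using member_le_sum[of x UNIV "r i a b"] r_nonneg r_sum by simp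
  then show ?thesis unfolding Q by (intro prod_le_1) (simp add: r_nonneg)
qed

lemma ccond_input_extrapolate:
  fixes Q1 Q2 :: "'x::finite list \<Rightarrow> 'y::finite list \<Rightarrow> real"
  assumes Q1: "ccond_input n Q1" and Q1_pos: "\<forall>xs\<in>seqs n. \<forall>ys\<in>seqs n. 0 < Q1 xs ys"
    and Q2: "ccond_input n Q2"
  obtains m where "0 < m" "ccond_input n (\<lambda>xs ys. (1 + m) * Q1 xs ys + (- m) * Q2 xs ys)"
proof
  define m where "m = Min ((\<lambda>(xs, ys). Q1 xs ys) ` (seqs n \<times> seqs n))"
  have m_le: "m \<le> Q1 xs ys" if "xs \<in> seqs n" "ys \<in> seqs n" for xs ys
    unfolding m_def using that by (intro Min_le) auto
  have "m \<in> (\<lambda>(xs, ys). Q1 xs ys) ` (seqs n \<times> seqs n)"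
    unfolding m_def by (intro Min_in) (auto simp: seqs_nonempty)
  then show "0 < m" using Q1_pos by auto
  have "0 \<le> (1 + m) * Q1 xs ys + (- m) * Q2 xs ys" if "xs \<in> seqs n" "ys \<in> seqs n" for xs ys
  proof -
    have "m * Q2 xs ys \<le> m" using \<open>0 < m\<close> ccond_input_le_1[OF Q2 that] by simp
    moreover have "0 \<le> m * Q1 xs ys" using \<open>0 < m\<close> Q1_pos that by (simp add: less_imp_le)
    ultimately show ?thesis using m_le[OF that] by (simp add: algebra_simps)
  qed
  then show "ccond_input n (\<lambda>xs ys. (1 + m) * Q1 xs ys + (- m) * Q2 xs ys)"
    by (intro ccond_input_affine[OF Q1 Q2]) auto
qed

lemma dirinfo_eq_of_same_output:
  fixes W :: "'x::finite list \<Rightarrow> 'y::finite list \<Rightarrow> real"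
  assumes chan: "ccond_chan n W"
    and Qs: "ccond_input n Qs" and Qs_pos: "\<forall>xs\<in>seqs n. \<forall>ys\<in>seqs n. 0 < Qs xs ys"
    and Qs_max: "\<forall>Q. ccond_input n Q \<longrightarrow> dirinfo n Q W \<le> dirinfo n Qs W"
    and Q: "ccond_input n Q"
    and same_output: "\<forall>ys\<in>seqs n. (\<Sum>xs\<in>seqs n. Q xs ys * W xs ys) = (\<Sum>xs\<in>seqs n. Qs xs ys * W xs ys)"
  shows "dirinfo n Q W = dirinfo n Qs W"
proof -
  obtain h where dirinfo: "\<And>Q. ccond_input n Q \<Longrightarrow> dirinfo n Q W =
     (\<Sum>xs\<in>seqs n. \<Sum>ys\<in>seqs n. Q xs ys * W xs ys * h xs ys)
   - (\<Sum>xs\<in>seqs n. \<Sum>ys\<in>seqs n. Q xs ys * W xs ys * log 2 (\<Sum>xs'\<in>seqs n. Q xs' ys * W xs' ys))"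
    using dirinfo_chain_rule[OF chan] by blast
  define p where "p ys = (\<Sum>xs\<in>seqs n. Qs xs ys * W xs ys)" for ys
  define L where "L Q' = (\<Sum>xs\<in>seqs n. \<Sum>ys\<in>seqs n. Q' xs ys * W xs ys * (h xs ys - log 2 (p ys)))"
    for Q' :: "'x list \<Rightarrow> 'y list \<Rightarrow> real"
  have dirinfo_L: "dirinfo n Q' W = L Q'"
    if "ccond_input n Q'" "\<forall>ys\<in>seqs n. (\<Sum>xs\<in>seqs n. Q' xs ys * W xs ys) = p ys" for Q'
    using that unfolding dirinfo[OF that(1)] L_def
    by (simp add: sum_subtractf right_diff_distrib)
  obtain m where m: "0 < m" and Qm: "ccond_input n (\<lambda>xs ys. (1 + m) * Qs xs ys + (- m) * Q xs ys)"
    using ccond_input_extrapolate[OF Qs Qs_pos Q] by blast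
  have "L (\<lambda>xs ys. (1 + m) * Qs xs ys + (- m) * Q xs ys) = (1 + m) * L Qs + (- m) * L Q"
    unfolding L_def sum_distrib_left sum.distrib[symmetric] by (intro sum.cong refl) (simp add: algebra_simps)
  moreover have "dirinfo n (\<lambda>xs ys. (1 + m) * Qs xs ys + (- m) * Q xs ys) W
      = L (\<lambda>xs ys. (1 + m) * Qs xs ys + (- m) * Q xs ys)"
  proof (rule dirinfo_L[OF Qm], intro ballI)
    fix ys :: "'y list"
    assume "ys \<in> seqs n"
    have "(\<Sum>xs\<in>seqs n. ((1 + m) * Qs xs ys + (- m) * Q xs ys) * W xs ys)
        = (1 + m) * (\<Sum>xs\<in>seqs n. Qs xs ys * W xs ys) + (- m) * (\<Sum>xs\<in>seqs n. Q xs ys * W xs ys)"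
      by (simp add: sum_distrib_left sum.distrib[symmetric] algebra_simps)
    then show "(\<Sum>xs\<in>seqs n. ((1 + m) * Qs xs ys + (- m) * Q xs ys) * W xs ys) = p ys"
      using same_output \<open>ys \<in> seqs n\<close> by (simp add: p_def algebra_simps)
  qed
  moreover have "dirinfo n Qs W = L Qs" "dirinfo n Q W = L Q"
    using dirinfo_L Qs Q same_output by (auto simp: p_def)
  moreover have "dirinfo n (\<lambda>xs ys. (1 + m) * Qs xs ys + (- m) * Q xs ys) W \<le> dirinfo n Qs W"
    using Qs_max Qm by blast
  ultimately have "m * L Qs \<le> m * L Q"
    by (simp add: algebra_simps)
  then have "L Qs \<le> L Q"
    using m by simp
  then show ?thesis
    using Qs_max Q \<open>dirinfo n Qs W = L Qs\<close> \<open>dirinfo n Q W = L Q\<close> by fastforce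
qed

lemma Cfb_n_eq_Cnf_n:
  fixes W :: "nat \<Rightarrow> 'x::finite list \<Rightarrow> 'y::finite list \<Rightarrow> real"
  assumes chan: "ccond_chan n (W n)"
    and Qs: "ccond_input n Qs" and Qs_pos: "\<forall>xs\<in>seqs n. \<forall>ys\<in>seqs n. 0 < Qs xs ys"
    and Qs_max: "\<forall>Q. ccond_input n Q \<longrightarrow> dirinfo n Q (W n) \<le> dirinfo n Qs (W n)"
    and P: "is_pmf_seq n P"
    and same_output: "\<forall>ys\<in>seqs n. (\<Sum>xs\<in>seqs n. W n xs ys * Qs xs ys) = (\<Sum>xs\<in>seqs n. W n xs ys * P xs)"
  shows "Cfb_n W n = Cnf_n W n"
proof -
  have dirinfo_P: "dirinfo n (\<lambda>xs ys. P xs) (W n) = dirinfo n Qs (W n)"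
    using same_output
    by (intro dirinfo_eq_of_same_output[OF chan Qs Qs_pos Qs_max ccond_input_of_pmf[OF P]])
       (simp add: mult.commute)
  have "Cfb_n W n = dirinfo n Qs (W n)"
    unfolding Cfb_n_def by (rule cSup_eq_maximum) (use Qs Qs_max in auto)
  moreover have "Cnf_n W n = dirinfo n Qs (W n)"
    unfolding Cnf_n_def
    by (rule cSup_eq_maximum) (use P dirinfo_P Qs_max ccond_input_of_pmf in \<open>auto intro: image_eqI[of _ _ P]\<close>)
  ultimately show ?thesis by simp
qed

theorem corollary1:
  fixes W :: "nat \<Rightarrow> 'x::finite list \<Rightarrow> 'y::finite list \<Rightarrow> real"
  assumes chan: "\<And>n. n \<ge> 1 \<Longrightarrow> ccond_chan n (W n)"
    and hyp: "\<And>n. n \<ge> 1 \<Longrightarrow>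
      \<exists>Qs. ccond_input n Qs
        \<and> (\<forall>xs\<in>seqs n. \<forall>ys\<in>seqs n. Qs xs ys > 0)
        \<and> (\<forall>Q. ccond_input n Q \<longrightarrow> dirinfo n Q (W n) \<le> dirinfo n Qs (W n))
        \<and> (\<exists>P. is_pmf_seq n P \<and>
             (\<forall>ys\<in>seqs n. (\<Sum>xs\<in>seqs n. W n xs ys * Qs xs ys) = (\<Sum>xs\<in>seqs n. W n xs ys * P xs)))"
  shows "feedback_capacity W = capacity W"
proof -
  have "Cfb_n W n = Cnf_n W n" if "n \<ge> 1" for n
    using hyp[OF that] Cfb_n_eq_Cnf_n[of n W] chan[OF that] by blast
  then have "(\<lambda>n. Cfb_n W n / real n) = (\<lambda>n. Cnf_n W n / real n)"
    by (metis div_by_0 less_one not_less of_nat_0)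
  then show ?thesis
    unfolding feedback_capacity_def capacity_def by simp
qed

end
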